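(* Let $G=(\mathcal V,\mathcal H,\nu,\iota;\mathcal S,\mu,\sigma_1,\sigma_2)$ be a 2-graph. Define the set of cells $\mathcal C_G:=\mathcal V\cup(\mathcal E\cup\mathcal E^{\mathrm{ext}})\cup\mathcal F$ with dimension $0$ for vertices, $1$ for (internal or external) edges and $2$ for faces, and the relation $<$ given by: for $v\in\mathcal V$, $e\in\mathcal E\cup\mathcal E^{\mathrm{ext}}$, $f\in\mathcal F$, $v<e$ iff there is $h\in e$ with $\nu(h)=v$; $e<f$ iff there are $h\in e$ and $s$ occurring in $f$ with $\mu(s)=h$; $v<f$ iff there is an $e$ with $v<e<f$. Then $\mathcal C_G$ is a pure complex in the sense of Reidemeister. If moreover $\nu^{-1}(v)\neq\emptyset$ for every $v\in\mathcal V$ and $\mu^{-1}(h)\neq\emptyset$ for every $h\in\mathcal H$, then $\mathcal C_G$ is a 2-dimensional complex.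
   Context: A 2-graph is a tuple $(\mathcal V,\mathcal H,\nu,\iota;\mathcal S,\mu,\sigma_1,\sigma_2)$ of finite sets $\mathcal V$ (vertices), $\mathcal H$ (half-edges), $\mathcal S$ (strand sections), maps $\nu:\mathcal H\to\mathcal V$, $\mu:\mathcal S\to\mathcal H$, an involution $\iota$ of $\mathcal H$, a fixed-point free involution $\sigma_1$ of $\mathcal S$ with $\nu\circ\mu\circ\sigma_1=\nu\circ\mu$, and an involution $\sigma_2$ of $\mathcal S$ with $\iota\circ\mu=\mu\circ\sigma_2$ such that $s$ is fixed by $\sigma_2$ iff $\mu(s)$ is fixed by $\iota$. The (internal) edges $\mathcal E$ are the two-element orbits $\{h,\iota(h)\}$; the external half-edges are the fixed points of $\iota$, and the external edges are $\mathcal E^{\mathrm{ext}}=\{\{h\}: \iota(h)=h\}$. Faces: a tuple $(s_1,\dots,s_{2n})$ of distinct strand sections with $s_{2i}=\sigma_1(s_{2i-1})$ and $s_{2i+1}=\sigma_2(s_{2i})$ is an external face if $s_1$ and $s_{2n}$ are fixed points of $\sigma_2$; if instead $\sigma_2(s_{2n})=s_1$, its equivalence class under cyclic shifts $s_i\mapsto s_{i+2}$ is an internal face; $\mathcal F$ is the set of all external and internal faces ("$s$ occurs in $f$" is independent of the representative). A complex in the sense of Reidemeister is a set $\mathcal C$ of cells with a dimension map $\dim:\mathcal C\to\mathbb N$ and a partial order $\le$ such that whenever $c>c''$ and $\dim c-\dim c''>1$ there is $c'$ with $c>c'>c''$. It is pure if every cell of nonzero dimension is $>$ some 0-cell. It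 is $n$-dimensional if $n$ is the maximal dimension of its cells and every cell is $\le$ some $n$-cell. *)

theory Defs
  imports Main
begin

text \<open>A 2-graph (V,H,nu,iota;S,mu,sigma1,sigma2), with carrier sets V, H, S
  inside ambient types; all maps are only constrained on the carriers.\<close>

definition two_graph ::
  "'v set \<Rightarrow> 'h set \<Rightarrow> ('h \<Rightarrow> 'v) \<Rightarrow> ('h \<Rightarrow> 'h) \<Rightarrow>
   's set \<Rightarrow> ('s \<Rightarrow> 'h) \<Rightarrow> ('s \<Rightarrow> 's) \<Rightarrow> ('s \<Rightarrow> 's) \<Rightarrow> bool" where
  "two_graph V H \<nu> \<iota> S \<mu> \<sigma>1 \<sigma>2 \<longleftrightarrow>
     finite V \<and> finite H \<and> finite S \<and>
     (\<forall>h\<in>H. \<nu> h \<in> V) \<and>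
     (\<forall>s\<in>S. \<mu> s \<in> H) \<and>
     (\<forall>h\<in>H. \<iota> h \<in> H \<and> \<iota> (\<iota> h) = h) \<and>
     (\<forall>s\<in>S. \<sigma>1 s \<in> S \<and> \<sigma>1 (\<sigma>1 s) = s \<and> \<sigma>1 s \<noteq> s) \<and>
     (\<forall>s\<in>S. \<nu> (\<mu> (\<sigma>1 s)) = \<nu> (\<mu> s)) \<and>
     (\<forall>s\<in>S. \<sigma>2 s \<in> S \<and> \<sigma>2 (\<sigma>2 s) = s) \<and>
     (\<forall>s\<in>S. \<iota> (\<mu> s) = \<mu> (\<sigma>2 s)) \<and>
     (\<forall>s\<in>S. \<sigma>2 s = s \<longleftrightarrow> \<iota> (\<mu> s) = \<mu> s)"

definition int_edges :: "'h set \<Rightarrow> ('h \<Rightarrow> 'h) \<Rightarrow> 'h set set" where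
  "int_edges H \<iota> = {{h, \<iota> h} | h. h \<in> H \<and> \<iota> h \<noteq> h}"

definition ext_edges :: "'h set \<Rightarrow> ('h \<Rightarrow> 'h) \<Rightarrow> 'h set set" where
  "ext_edges H \<iota> = {{h} | h. h \<in> H \<and> \<iota> h = h}"

text \<open>A tuple (s_1,...,s_{2n}), n \<ge> 1, of distinct strand sections with
  s_{2i} = sigma1 s_{2i-1} and s_{2i+1} = sigma2 s_{2i} (written 0-indexed below).\<close>

definition face_chain :: "'s set \<Rightarrow> ('s \<Rightarrow> 's) \<Rightarrow> ('s \<Rightarrow> 's) \<Rightarrow> 's list \<Rightarrow> bool" where
  "face_chain S \<sigma>1 \<sigma>2 xs \<longleftrightarrow>
     xs \<noteq> [] \<and> even (length xs) \<and> distinct xs \<and> set xs \<subseteq> S \<and>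
     (\<forall>i. 2*i+1 < length xs \<longrightarrow> xs ! (2*i+1) = \<sigma>1 (xs ! (2*i))) \<and>
     (\<forall>i. 2*i+2 < length xs \<longrightarrow> xs ! (2*i+2) = \<sigma>2 (xs ! (2*i+1)))"

definition ext_face_tuple :: "'s set \<Rightarrow> ('s \<Rightarrow> 's) \<Rightarrow> ('s \<Rightarrow> 's) \<Rightarrow> 's list \<Rightarrow> bool" where
  "ext_face_tuple S \<sigma>1 \<sigma>2 xs \<longleftrightarrow>
     face_chain S \<sigma>1 \<sigma>2 xs \<and> \<sigma>2 (hd xs) = hd xs \<and> \<sigma>2 (last xs) = last xs"

definition int_face_tuple :: "'s set \<Rightarrow> ('s \<Rightarrow> 's) \<Rightarrow> ('s \<Rightarrow> 's) \<Rightarrow> 's list \<Rightarrow> bool" where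
  "int_face_tuple S \<sigma>1 \<sigma>2 xs \<longleftrightarrow>
     face_chain S \<sigma>1 \<sigma>2 xs \<and> \<sigma>2 (last xs) = hd xs"

text \<open>Faces are represented as sets of tuples: an external face is the singleton
  of its tuple, an internal face is the class of its tuple under the cyclic
  shifts s_i \<mapsto> s_{i+2}.\<close>

definition faces :: "'s set \<Rightarrow> ('s \<Rightarrow> 's) \<Rightarrow> ('s \<Rightarrow> 's) \<Rightarrow> 's list set set" where
  "faces S \<sigma>1 \<sigma>2 =
     {{xs} | xs. ext_face_tuple S \<sigma>1 \<sigma>2 xs} \<union>
     {{rotate (2*k) xs | k. True} | xs. int_face_tuple S \<sigma>1 \<sigma>2 xs}"

definition occurs_in :: "'s \<Rightarrow> 's list set \<Rightarrow> bool" where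
  "occurs_in s f \<longleftrightarrow> (\<exists>xs\<in>f. s \<in> set xs)"

datatype ('v, 'h, 's) cell = VCell 'v | ECell "'h set" | FCell "'s list set"

fun cdim :: "('v, 'h, 's) cell \<Rightarrow> nat" where
  "cdim (VCell _) = 0"
| "cdim (ECell _) = 1"
| "cdim (FCell _) = 2"

definition cells ::
  "'v set \<Rightarrow> 'h set \<Rightarrow> ('h \<Rightarrow> 'h) \<Rightarrow> 's set \<Rightarrow> ('s \<Rightarrow> 's) \<Rightarrow> ('s \<Rightarrow> 's)
   \<Rightarrow> ('v, 'h, 's) cell set" where
  "cells V H \<iota> S \<sigma>1 \<sigma>2 =
     VCell ` V \<union> ECell ` (int_edges H \<iota> \<union> ext_edges H \<iota>) \<union> FCell ` faces S \<sigma>1 \<sigma>2"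

fun cellG_less :: "'h set set \<Rightarrow> ('h \<Rightarrow> 'v) \<Rightarrow> ('s \<Rightarrow> 'h) \<Rightarrow>
     ('v, 'h, 's) cell \<Rightarrow> ('v, 'h, 's) cell \<Rightarrow> bool" where
  "cellG_less Ed \<nu> \<mu> (VCell v) (ECell e) = (\<exists>h\<in>e. \<nu> h = v)"
| "cellG_less Ed \<nu> \<mu> (ECell e) (FCell f) = (\<exists>h\<in>e. \<exists>s. occurs_in s f \<and> \<mu> s = h)"
| "cellG_less Ed \<nu> \<mu> (VCell v) (FCell f) =
     (\<exists>e\<in>Ed. (\<exists>h\<in>e. \<nu> h = v) \<and> (\<exists>h\<in>e. \<exists>s. occurs_in s f \<and> \<mu> s = h))"
| "cellG_less Ed \<nu> \<mu> _ _ = False"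

definition cellG_le ::
  "'h set set \<Rightarrow> ('h \<Rightarrow> 'v) \<Rightarrow> ('s \<Rightarrow> 'h) \<Rightarrow>
     ('v, 'h, 's) cell \<Rightarrow> ('v, 'h, 's) cell \<Rightarrow> bool" where
  "cellG_le Ed \<nu> \<mu> c d \<longleftrightarrow> c = d \<or> cellG_less Ed \<nu> \<mu> c d"

definition reidemeister_complex :: "'c set \<Rightarrow> ('c \<Rightarrow> nat) \<Rightarrow> ('c \<Rightarrow> 'c \<Rightarrow> bool) \<Rightarrow> bool" where
  "reidemeister_complex C dim le \<longleftrightarrow>
     (\<forall>c\<in>C. le c c) \<and>
     (\<forall>a\<in>C. \<forall>b\<in>C. le a b \<and> le b a \<longrightarrow> a = b) \<and>
     (\<forall>a\<in>C. \<forall>b\<in>C. \<forall>c\<in>C. le a b \<and> le b c \<longrightarrow> le a c) \<and>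
     (\<forall>c\<in>C. \<forall>c''\<in>C. le c'' c \<and> c'' \<noteq> c \<and> dim c > dim c'' + 1 \<longrightarrow>
        (\<exists>c'\<in>C. le c' c \<and> c' \<noteq> c \<and> le c'' c' \<and> c'' \<noteq> c'))"

definition pure_complex :: "'c set \<Rightarrow> ('c \<Rightarrow> nat) \<Rightarrow> ('c \<Rightarrow> 'c \<Rightarrow> bool) \<Rightarrow> bool" where
  "pure_complex C dim le \<longleftrightarrow>
     (\<forall>c\<in>C. dim c \<noteq> 0 \<longrightarrow> (\<exists>c0\<in>C. dim c0 = 0 \<and> le c0 c \<and> c0 \<noteq> c))"

definition n_dim_complex :: "nat \<Rightarrow> 'c set \<Rightarrow> ('c \<Rightarrow> nat) \<Rightarrow> ('c \<Rightarrow> 'c \<Rightarrow> bool) \<Rightarrow> bool" where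
  "n_dim_complex n C dim le \<longleftrightarrow>
     (\<forall>c\<in>C. dim c \<le> n) \<and> (\<forall>c\<in>C. \<exists>d\<in>C. dim d = n \<and> le c d)"

end

theory Submission
  imports Defs
begin

text \<open>Incidences strictly raise the dimension, and \<open>v < f\<close> is by definition witnessed by an
  edge \<open>e\<close> with \<open>v < e < f\<close>; so the order axioms, the intermediate-cell condition and purity
  are bookkeeping. The substance of 2-dimensionality is that every strand section \<open>s\<close> lies on
  a face. Start from the chain \<open>(s, \<sigma>1 s)\<close> and prolong it at an open end by \<open>\<sigma>2\<close> followed
  by \<open>\<sigma>1\<close>. The new sections are fresh: \<open>\<sigma>1\<close> pairs the sections of a chain among
  themselves, and \<open>\<sigma>2\<close> pairs inner sections with their neighbours, so \<open>\<sigma>2\<close> maps an end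
  into the chain only onto itself or onto the other end. Chains are distinct lists in the
  finite set \<open>S\<close>, so prolongation stops, and it can only stop at an external or internal
  face tuple.\<close>

lemma face_chain_iff:
  "face_chain S \<sigma>1 \<sigma>2 xs \<longleftrightarrow>
     xs \<noteq> [] \<and> even (length xs) \<and> distinct xs \<and> set xs \<subseteq> S \<and>
     (\<forall>j. Suc j < length xs \<longrightarrow> xs ! Suc j = (if even j then \<sigma>1 else \<sigma>2) (xs ! j))"
proof -
  let ?step = "\<forall>j. Suc j < length xs \<longrightarrow> xs ! Suc j = (if even j then \<sigma>1 else \<sigma>2) (xs ! j)"
  let ?steps = "(\<forall>i. 2*i+1 < length xs \<longrightarrow> xs ! (2*i+1) = \<sigma>1 (xs ! (2*i))) \<and>
      (\<forall>i. 2*i+2 < length xs \<longrightarrow> xs ! (2*i+2) = \<sigma>2 (xs ! (2*i+1)))"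
  have "?step \<longleftrightarrow> ?steps"
  proof
    assume ?step
    then show ?steps by (auto dest: spec[of _ "2*_"] spec[of _ "2*_+1"])
  next
    assume ?steps
    then show ?step by (auto elim!: evenE oddE)
  qed
  then show ?thesis unfolding face_chain_def by blast
qed

lemma self_mem_even_rotations: "xs \<in> {rotate (2*k) xs | k. True}"
  by (rule CollectI, rule exI[of _ 0]) simp

lemma face_tuple_in_faces:
  assumes "ext_face_tuple S \<sigma>1 \<sigma>2 ys \<or> int_face_tuple S \<sigma>1 \<sigma>2 ys"
  shows "\<exists>f\<in>faces S \<sigma>1 \<sigma>2. ys \<in> f"
proof (cases "ext_face_tuple S \<sigma>1 \<sigma>2 ys")
  case True
  then have "{ys} \<in> faces S \<sigma>1 \<sigma>2" by (auto simp: faces_def)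
  then show ?thesis by blast
next
  case False
  with assms have "{rotate (2*k) ys | k. True} \<in> faces S \<sigma>1 \<sigma>2" by (auto simp: faces_def)
  with self_mem_even_rotations show ?thesis by blast
qed

lemma face_has_chain:
  assumes "f \<in> faces S \<sigma>1 \<sigma>2"
  shows "\<exists>xs\<in>f. face_chain S \<sigma>1 \<sigma>2 xs"
  using assms self_mem_even_rotations
  by (auto simp: faces_def ext_face_tuple_def int_face_tuple_def)

locale strand_involutions =
  fixes S :: "'s set" and \<sigma>1 \<sigma>2 :: "'s \<Rightarrow> 's"
  assumes finite_S: "finite S"
    and \<sigma>1_in: "s \<in> S \<Longrightarrow> \<sigma>1 s \<in> S" and \<sigma>1_\<sigma>1: "s \<in> S \<Longrightarrow> \<sigma>1 (\<sigma>1 s) = s"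
    and \<sigma>1_neq: "s \<in> S \<Longrightarrow> \<sigma>1 s \<noteq> s"
    and \<sigma>2_in: "s \<in> S \<Longrightarrow> \<sigma>2 s \<in> S" and \<sigma>2_\<sigma>2: "s \<in> S \<Longrightarrow> \<sigma>2 (\<sigma>2 s) = s"
begin

lemma face_chain_nth_Suc:
  "face_chain S \<sigma>1 \<sigma>2 xs \<Longrightarrow> Suc j < length xs \<Longrightarrow>
    xs ! Suc j = (if even j then \<sigma>1 else \<sigma>2) (xs ! j)"
  by (simp add: face_chain_iff)

lemma face_chain_nth_from_Suc:
  assumes "face_chain S \<sigma>1 \<sigma>2 xs" "Suc j < length xs"
  shows "xs ! j = (if even j then \<sigma>1 else \<sigma>2) (xs ! Suc j)"
proof -
  have "xs ! j \<in> S" using assms by (auto simp: face_chain_iff)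
  then show ?thesis using face_chain_nth_Suc[OF assms] by (simp add: \<sigma>1_\<sigma>1 \<sigma>2_\<sigma>2)
qed

lemma face_chain_nth_eq_iff:
  "face_chain S \<sigma>1 \<sigma>2 xs \<Longrightarrow> i < length xs \<Longrightarrow> j < length xs \<Longrightarrow>
    xs ! i = xs ! j \<longleftrightarrow> i = j"
  by (simp add: face_chain_iff nth_eq_iff_index_eq)

lemma face_chain_\<sigma>1_closed:
  assumes xs: "face_chain S \<sigma>1 \<sigma>2 xs" and x: "x \<in> set xs"
  shows "\<sigma>1 x \<in> set xs"
proof -
  obtain j where j: "j < length xs" "x = xs ! j" using x by (auto simp: in_set_conv_nth)
  show ?thesis
  proof (cases "even j")
    case True
    moreover have "even (length xs)" using xs by (simp add: face_chain_iff)
    ultimately have Suc_j: "Suc j < length xs" using j(1) by presburger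
    then have "\<sigma>1 x = xs ! Suc j" using face_chain_nth_Suc[OF xs Suc_j] True j(2) by simp
    then show ?thesis using Suc_j by simp
  next
    case False
    then obtain k where k: "j = Suc k" "even k" by (cases j) auto
    then have "\<sigma>1 x = xs ! k" using face_chain_nth_from_Suc[OF xs, of k] j by simp
    then show ?thesis using j k by simp
  qed
qed

lemma face_chain_\<sigma>2_last:
  assumes xs: "face_chain S \<sigma>1 \<sigma>2 xs" and in_xs: "\<sigma>2 (last xs) \<in> set xs"
  shows "\<sigma>2 (last xs) = last xs \<or> \<sigma>2 (last xs) = hd xs"
proof -
  define n where "n = length xs"
  have n: "n \<noteq> 0" "even n" and last: "last xs = xs ! (n - 1)" and hd: "hd xs = xs ! 0"
    using xs by (auto simp: n_def face_chain_iff last_conv_nth hd_conv_nth)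
  have \<sigma>2_last: "\<sigma>2 (\<sigma>2 (last xs)) = last xs"
    using xs n by (intro \<sigma>2_\<sigma>2) (auto simp: face_chain_iff)
  obtain j where j: "j < n" "\<sigma>2 (last xs) = xs ! j"
    using in_xs by (auto simp: n_def in_set_conv_nth)
  consider "j = 0" | "j = n - 1" | "odd j" "Suc j < n" | k where "j = Suc k" "odd k"
    using j(1) by (metis Suc_lessI diff_Suc_1 even_Suc not0_implies_Suc)
  then show ?thesis
  proof cases
    case 3
    then have "xs ! Suc j = xs ! (n - 1)"
      using face_chain_nth_Suc[OF xs, of j] j \<sigma>2_last last by (simp add: n_def)
    then have "Suc j = n - 1" using face_chain_nth_eq_iff[OF xs] 3 n by (simp add: n_def)
    then show ?thesis using 3 n by presburger
  next
    case (4 k)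
    then have "xs ! k = xs ! (n - 1)"
      using face_chain_nth_from_Suc[OF xs, of k] j \<sigma>2_last last by (simp add: n_def)
    then have "k = n - 1" using face_chain_nth_eq_iff[OF xs] j 4 by (simp add: n_def)
    then show ?thesis using j 4 n by simp
  qed (use j hd last in auto)
qed

lemma face_chain_rev:
  assumes xs: "face_chain S \<sigma>1 \<sigma>2 xs"
  shows "face_chain S \<sigma>1 \<sigma>2 (rev xs)"
  unfolding face_chain_iff
proof (intro conjI allI impI)
  fix j assume j: "Suc j < length (rev xs)"
  define m where "m = length xs - Suc (Suc j)"
  have "even (length xs)" using xs by (simp add: face_chain_iff)
  then have m: "Suc m < length xs" "length xs - Suc j = Suc m" "even m = even j"
    using j by (auto simp: m_def)
  then show "rev xs ! Suc j = (if even j then \<sigma>1 else \<sigma>2) (rev xs ! j)"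
    using face_chain_nth_from_Suc[OF xs m(1)] j by (simp add: rev_nth m_def)
qed (use xs in \<open>auto simp: face_chain_iff\<close>)

lemma face_chain_extend_last:
  assumes xs: "face_chain S \<sigma>1 \<sigma>2 xs"
    and not_fixed: "\<sigma>2 (last xs) \<noteq> last xs" and not_closed: "\<sigma>2 (last xs) \<noteq> hd xs"
  shows "face_chain S \<sigma>1 \<sigma>2 (xs @ [\<sigma>2 (last xs), \<sigma>1 (\<sigma>2 (last xs))])"
proof -
  define y where "y = \<sigma>2 (last xs)"
  define n where "n = length xs"
  have n: "n \<noteq> 0" "even n" and last: "last xs = xs ! (n - 1)"
    using xs by (auto simp: n_def face_chain_iff last_conv_nth)
  have y: "y \<in> S" "\<sigma>1 y \<in> S" "\<sigma>1 y \<noteq> y" "\<sigma>1 (\<sigma>1 y) = y"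
    using xs by (auto simp: y_def face_chain_iff intro!: \<sigma>2_in \<sigma>1_in \<sigma>1_neq \<sigma>1_\<sigma>1)
  have y_fresh: "y \<notin> set xs"
    using face_chain_\<sigma>2_last[OF xs] not_fixed not_closed by (auto simp: y_def)
  moreover have "\<sigma>1 y \<notin> set xs"
    using face_chain_\<sigma>1_closed[OF xs, of "\<sigma>1 y"] y_fresh y(4) by auto
  moreover have "(xs @ [y, \<sigma>1 y]) ! Suc j = (if even j then \<sigma>1 else \<sigma>2) ((xs @ [y, \<sigma>1 y]) ! j)"
    if j: "Suc j < length (xs @ [y, \<sigma>1 y])" for j
  proof -
    have "Suc j < n \<or> Suc j = n \<or> j = n" using j by (auto simp: n_def)
    then consider "Suc j < n" | "Suc j = n" | "j = n" by blast
    then show ?thesis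
    proof cases
      case 1
      then show ?thesis
        using face_chain_nth_Suc[OF xs 1[unfolded n_def]] by (simp add: nth_append n_def)
    next
      case 2
      then have "j = n - 1" "odd j" using n by auto
      then show ?thesis using n last by (auto simp: nth_append n_def y_def)
    qed (use n in \<open>simp_all add: n_def nth_append\<close>)
  qed
  ultimately show ?thesis
    using xs y by (auto simp: face_chain_iff y_def)
qed

lemma face_chain_extend_hd:
  assumes xs: "face_chain S \<sigma>1 \<sigma>2 xs"
    and not_fixed: "\<sigma>2 (hd xs) \<noteq> hd xs" and not_closed: "\<sigma>2 (hd xs) \<noteq> last xs"
  shows "face_chain S \<sigma>1 \<sigma>2 ([\<sigma>1 (\<sigma>2 (hd xs)), \<sigma>2 (hd xs)] @ xs)"
proof -
  have "xs \<noteq> []" using xs by (simp add: face_chain_iff)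
  then have "face_chain S \<sigma>1 \<sigma>2 (rev xs @ [\<sigma>2 (hd xs), \<sigma>1 (\<sigma>2 (hd xs))])"
    using face_chain_extend_last[OF face_chain_rev[OF xs]] not_fixed not_closed
    by (simp add: last_rev hd_rev)
  from face_chain_rev[OF this] show ?thesis by simp
qed

lemma face_chain_length_le: "face_chain S \<sigma>1 \<sigma>2 xs \<Longrightarrow> length xs \<le> card S"
  by (metis face_chain_iff card_mono distinct_card finite_S)

lemma face_chain_extends_to_face_tuple:
  assumes "face_chain S \<sigma>1 \<sigma>2 xs"
  shows "\<exists>ys. (ext_face_tuple S \<sigma>1 \<sigma>2 ys \<or> int_face_tuple S \<sigma>1 \<sigma>2 ys) \<and> set xs \<subseteq> set ys"
  using assms
proof (induction "card S - length xs" arbitrary: xs rule: less_induct)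
  case less
  note xs = less.prems
  have extend: ?case
    if ys: "face_chain S \<sigma>1 \<sigma>2 ys" "set xs \<subseteq> set ys" "length xs < length ys" for ys
    using less.hyps[OF _ ys(1)] face_chain_length_le[OF ys(1)] ys(2,3) by force
  have "hd xs \<in> S" "last xs \<in> S" using xs by (auto simp: face_chain_iff)
  then have hd_last: "\<sigma>2 (hd xs) = last xs \<longleftrightarrow> \<sigma>2 (last xs) = hd xs"
    by (metis \<sigma>2_\<sigma>2)
  consider "\<sigma>2 (last xs) = hd xs" | "\<sigma>2 (last xs) = last xs" "\<sigma>2 (hd xs) = hd xs"
    | "\<sigma>2 (last xs) \<noteq> last xs" "\<sigma>2 (last xs) \<noteq> hd xs"
    | "\<sigma>2 (hd xs) \<noteq> hd xs" "\<sigma>2 (last xs) \<noteq> hd xs"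
    by blast
  then show ?case
  proof cases
    case 1
    then show ?thesis using xs by (auto simp: int_face_tuple_def)
  next
    case 2
    then show ?thesis using xs by (auto simp: ext_face_tuple_def)
  next
    case 3
    then show ?thesis using extend[OF face_chain_extend_last[OF xs 3]] by auto
  next
    case 4
    then show ?thesis using extend[OF face_chain_extend_hd[OF xs]] hd_last by auto
  qed
qed

lemma strand_occurs_in_face:
  assumes "s \<in> S"
  shows "\<exists>f\<in>faces S \<sigma>1 \<sigma>2. occurs_in s f"
proof -
  have "face_chain S \<sigma>1 \<sigma>2 [s, \<sigma>1 s]"
    using assms by (simp add: face_chain_iff \<sigma>1_in \<sigma>1_neq[symmetric] less_Suc_eq)
  then obtain ys where "ext_face_tuple S \<sigma>1 \<sigma>2 ys \<or> int_face_tuple S \<sigma>1 \<sigma>2 ys" "s \<in> set ys"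
    using face_chain_extends_to_face_tuple by fastforce
  then show ?thesis using face_tuple_in_faces by (fastforce simp: occurs_in_def)
qed

end

lemma cellG_less_cdim: "cellG_less Ed \<nu> \<mu> a b \<Longrightarrow> cdim a < cdim b"
  by (cases a; cases b) auto

lemma reidemeister_complex_cell_sets:
  "reidemeister_complex (VCell ` V \<union> ECell ` Ed \<union> FCell ` F) cdim (cellG_le Ed \<nu> \<mu>)"
  (is "reidemeister_complex ?C _ _")
  unfolding reidemeister_complex_def
proof (intro conjI ballI impI)
  fix a b assume "cellG_le Ed \<nu> \<mu> a b \<and> cellG_le Ed \<nu> \<mu> b a"
  then show "a = b" unfolding cellG_le_def by (metis cellG_less_cdim less_asym)
next
  fix a b c assume "b \<in> ?C" "cellG_le Ed \<nu> \<mu> a b \<and> cellG_le Ed \<nu> \<mu> b c"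
    \<comment> \<open>for \<open>v < e < f\<close>, \<open>b \<in> ?C\<close> puts \<open>e\<close> into \<open>Ed\<close>, as \<open>v < f\<close> demands\<close>
  then show "cellG_le Ed \<nu> \<mu> a c"
    by (cases a; cases b; cases c) (auto simp: cellG_le_def)
next
  fix c c'' assume "cellG_le Ed \<nu> \<mu> c'' c \<and> c'' \<noteq> c \<and> cdim c > cdim c'' + 1"
  then obtain v f where vf: "c'' = VCell v" "c = FCell f" "cellG_less Ed \<nu> \<mu> c'' c"
    by (cases c''; cases c) (auto simp: cellG_le_def)
  then obtain e where "e \<in> Ed" "cellG_less Ed \<nu> \<mu> c'' (ECell e)" "cellG_less Ed \<nu> \<mu> (ECell e) c"
    by auto
  then show "\<exists>c'\<in>?C. cellG_le Ed \<nu> \<mu> c' c \<and> c' \<noteq> c \<and> cellG_le Ed \<nu> \<mu> c'' c' \<and> c'' \<noteq> c'"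
    using vf by (intro bexI[of _ "ECell e"]) (auto simp: cellG_le_def)
qed (simp add: cellG_le_def)

lemma cellG_less_vertex_face:
  "e \<in> Ed \<Longrightarrow> cellG_less Ed \<nu> \<mu> (VCell v) (ECell e) \<Longrightarrow> cellG_less Ed \<nu> \<mu> (ECell e) (FCell f)
    \<Longrightarrow> cellG_less Ed \<nu> \<mu> (VCell v) (FCell f)"
  by auto

lemma pure_complex_cell_sets:
  assumes edge_vertex: "\<forall>e\<in>Ed. \<exists>v\<in>V. cellG_less Ed \<nu> \<mu> (VCell v) (ECell e)"
    and face_edge: "\<forall>f\<in>F. \<exists>e\<in>Ed. cellG_less Ed \<nu> \<mu> (ECell e) (FCell f)"
  shows "pure_complex (VCell ` V \<union> ECell ` Ed \<union> FCell ` F) cdim (cellG_le Ed \<nu> \<mu>)"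
  (is "pure_complex ?C _ _")
  unfolding pure_complex_def
proof (intro ballI impI)
  fix c assume c: "c \<in> ?C" "cdim c \<noteq> 0"
  then obtain v where "v \<in> V" "cellG_less Ed \<nu> \<mu> (VCell v) c"
  proof (cases c)
    case (ECell e)
    then show ?thesis using c edge_vertex that by auto
  next
    case (FCell f)
    then have "f \<in> F" using c by auto
    then obtain e where "e \<in> Ed" "cellG_less Ed \<nu> \<mu> (ECell e) c" using face_edge FCell by blast
    then show ?thesis using edge_vertex that FCell cellG_less_vertex_face by metis
  qed (use c in simp)
  then show "\<exists>c0\<in>?C. cdim c0 = 0 \<and> cellG_le Ed \<nu> \<mu> c0 c \<and> c0 \<noteq> c"
    by (intro bexI[of _ "VCell v"]) (auto simp: cellG_le_def)
qed

lemma n_dim_complex_2_cell_sets: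
  assumes vertex_edge: "\<forall>v\<in>V. \<exists>e\<in>Ed. cellG_less Ed \<nu> \<mu> (VCell v) (ECell e)"
    and edge_face: "\<forall>e\<in>Ed. \<exists>f\<in>F. cellG_less Ed \<nu> \<mu> (ECell e) (FCell f)"
  shows "n_dim_complex 2 (VCell ` V \<union> ECell ` Ed \<union> FCell ` F) cdim (cellG_le Ed \<nu> \<mu>)"
  (is "n_dim_complex 2 ?C _ _")
  unfolding n_dim_complex_def
proof (intro conjI ballI)
  fix c assume c: "c \<in> ?C"
  show "cdim c \<le> 2" by (cases c) auto
  obtain f where "f \<in> F" "cellG_le Ed \<nu> \<mu> c (FCell f)"
  proof (cases c)
    case (VCell v)
    then have "v \<in> V" using c by auto
    then obtain e where "e \<in> Ed" "cellG_less Ed \<nu> \<mu> c (ECell e)" using vertex_edge VCell by blast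
    then show ?thesis
      using edge_face that VCell cellG_less_vertex_face unfolding cellG_le_def by metis
  next
    case (ECell e)
    then show ?thesis using c edge_face that unfolding cellG_le_def by auto
  next
    case (FCell f)
    then show ?thesis using c that unfolding cellG_le_def by auto
  qed
  then show "\<exists>d\<in>?C. cdim d = 2 \<and> cellG_le Ed \<nu> \<mu> c d"
    by (intro bexI[of _ "FCell f"]) auto
qed

lemma half_edge_in_edge: "h \<in> H \<Longrightarrow> \<exists>e\<in>int_edges H \<iota> \<union> ext_edges H \<iota>. h \<in> e"
  by (cases "\<iota> h = h") (auto simp: int_edges_def ext_edges_def)

lemma edge_has_half_edge: "e \<in> int_edges H \<iota> \<union> ext_edges H \<iota> \<Longrightarrow> \<exists>h\<in>e. h \<in> H"
  by (auto simp: int_edges_def ext_edges_def)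

lemma edge_has_vertex:
  assumes "\<forall>h\<in>H. \<nu> h \<in> V" and "e \<in> int_edges H \<iota> \<union> ext_edges H \<iota>"
  shows "\<exists>v\<in>V. cellG_less Ed \<nu> \<mu> (VCell v) (ECell e)"
  using edge_has_half_edge[OF assms(2)] assms(1) by auto

lemma vertex_on_edge:
  assumes "v \<in> \<nu> ` H"
  shows "\<exists>e\<in>int_edges H \<iota> \<union> ext_edges H \<iota>. cellG_less Ed \<nu> \<mu> (VCell v) (ECell e)"
  using assms half_edge_in_edge by fastforce

lemma (in strand_involutions) edge_on_face:
  assumes "\<forall>h\<in>H. \<exists>s\<in>S. \<mu> s = h" and "e \<in> int_edges H \<iota> \<union> ext_edges H \<iota>"
  shows "\<exists>f\<in>faces S \<sigma>1 \<sigma>2. cellG_less Ed \<nu> \<mu> (ECell e) (FCell f)"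
proof -
  obtain h where "h \<in> e" "h \<in> H" using edge_has_half_edge[OF assms(2)] by blast
  moreover obtain s where "s \<in> S" "\<mu> s = h" using assms(1) \<open>h \<in> H\<close> by blast
  moreover obtain f where "f \<in> faces S \<sigma>1 \<sigma>2" "occurs_in s f"
    using strand_occurs_in_face[OF \<open>s \<in> S\<close>] by blast
  ultimately show ?thesis by auto
qed

lemma face_has_edge:
  assumes "\<forall>s\<in>S. \<mu> s \<in> H" and "f \<in> faces S \<sigma>1 \<sigma>2"
  shows "\<exists>e\<in>int_edges H \<iota> \<union> ext_edges H \<iota>. cellG_less Ed \<nu> \<mu> (ECell e) (FCell f)"
proof -
  obtain xs where xs: "xs \<in> f" "face_chain S \<sigma>1 \<sigma>2 xs" using face_has_chain[OF assms(2)] by blast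
  then have "hd xs \<in> set xs" "hd xs \<in> S" by (auto simp: face_chain_iff)
  then have "occurs_in (hd xs) f" "\<mu> (hd xs) \<in> H" using xs(1) assms(1) by (auto simp: occurs_in_def)
  then show ?thesis using half_edge_in_edge by fastforce
qed

lemma two_graph_strand_involutions:
  "two_graph V H \<nu> \<iota> S \<mu> \<sigma>1 \<sigma>2 \<Longrightarrow> strand_involutions S \<sigma>1 \<sigma>2"
  unfolding two_graph_def strand_involutions_def by blast

theorem mainTheorem2:
  fixes V :: "'v set" and H :: "'h set" and S :: "'s set"
    and \<nu> :: "'h \<Rightarrow> 'v" and \<iota> :: "'h \<Rightarrow> 'h" and \<mu> :: "'s \<Rightarrow> 'h"
    and \<sigma>1 \<sigma>2 :: "'s \<Rightarrow> 's"
  assumes G: "two_graph V H \<nu> \<iota> S \<mu> \<sigma>1 \<sigma>2"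
  defines "Ed \<equiv> int_edges H \<iota> \<union> ext_edges H \<iota>"
  defines "C \<equiv> cells V H \<iota> S \<sigma>1 \<sigma>2"
  shows "reidemeister_complex C cdim (cellG_le Ed \<nu> \<mu>) \<and>
         pure_complex C cdim (cellG_le Ed \<nu> \<mu>) \<and>
         ((\<forall>v\<in>V. \<exists>h\<in>H. \<nu> h = v) \<and> (\<forall>h\<in>H. \<exists>s\<in>S. \<mu> s = h)
            \<longrightarrow> n_dim_complex 2 C cdim (cellG_le Ed \<nu> \<mu>))"
proof (intro conjI impI)
  have C: "C = VCell ` V \<union> ECell ` Ed \<union> FCell ` faces S \<sigma>1 \<sigma>2"
    by (simp add: C_def Ed_def cells_def)
  have \<nu>_in: "\<forall>h\<in>H. \<nu> h \<in> V" and \<mu>_in: "\<forall>s\<in>S. \<mu> s \<in> H"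
    using G by (auto simp: two_graph_def)
  show "reidemeister_complex C cdim (cellG_le Ed \<nu> \<mu>)"
    unfolding C by (rule reidemeister_complex_cell_sets)
  have "\<forall>e\<in>Ed. \<exists>v\<in>V. cellG_less Ed \<nu> \<mu> (VCell v) (ECell e)"
    unfolding Ed_def using edge_has_vertex[OF \<nu>_in] by (intro ballI)
  moreover have "\<forall>f\<in>faces S \<sigma>1 \<sigma>2. \<exists>e\<in>Ed. cellG_less Ed \<nu> \<mu> (ECell e) (FCell f)"
    unfolding Ed_def using face_has_edge[OF \<mu>_in] by (intro ballI)
  ultimately show "pure_complex C cdim (cellG_le Ed \<nu> \<mu>)"
    unfolding C by (rule pure_complex_cell_sets)
  assume surj: "(\<forall>v\<in>V. \<exists>h\<in>H. \<nu> h = v) \<and> (\<forall>h\<in>H. \<exists>s\<in>S. \<mu> s = h)"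
  have "\<forall>v\<in>V. \<exists>e\<in>Ed. cellG_less Ed \<nu> \<mu> (VCell v) (ECell e)"
    unfolding Ed_def using surj by (intro ballI vertex_on_edge) auto
  moreover have "\<forall>e\<in>Ed. \<exists>f\<in>faces S \<sigma>1 \<sigma>2. cellG_less Ed \<nu> \<mu> (ECell e) (FCell f)"
    unfolding Ed_def using surj
    by (intro ballI strand_involutions.edge_on_face[OF two_graph_strand_involutions[OF G]]) auto
  ultimately show "n_dim_complex 2 C cdim (cellG_le Ed \<nu> \<mu>)"
    unfolding C by (rule n_dim_complex_2_cell_sets)
qed

end
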